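(* Let $\mathbb{F}$ be the finite field of order $q$ and let $M_1$ and $M_2$ be orthogonal sudoku solutions of order $q^2$ generated by sudoku flags $Z_1=(g_1,V_1)$ and $Z_2=(g_2,V_2)$, respectively. If the composite solution $N_{12}$ is a sudoku solution, then it is a linear sudoku solution generated by the two-dimensional subspace $g_{12}=V_1\cap V_2$, i.e. for each symbol the set of locations of $N_{12}$ housing that symbol is a coset of $V_1\cap V_2$.
   Context: Locations of a sudoku solution of order $q^2$ are identified with vectors $(x_1,x_2,x_3,x_4)\in\mathbb{F}^4$: $x_1$ is the large row, $x_2$ the row within the large row, $x_3$ the large column, $x_4$ the column within the large column; rows, columns and subsquares are the sets of locations with fixed $(x_1,x_2)$, $(x_3,x_4)$, $(x_1,x_3)$ respectively. A sudoku solution of order $q^2$ assigns symbols $\{0,\dots,q^2-1\}$ to locations so that each symbol occurs exactly once in every row, column and subsquare; two are orthogonal if upon superimposition each ordered pair of symbols occurs exactly once. Each symbol $x=b_qq+b_1$ ($b_q,b_1\in\{0,\dots,q-1\}$) has radix digit $b_q$. The composite solution $N_{12}$ of $M_1,M_2$ assigns to each location the symbol $q\,r_1+r_2$, where $r_i$ is the radix digit of the symbol of $M_i$ at that location. A flag is a pair $(g,V)$ of subspaces of $\mathbb{F}^4$ with $\dim g=2$, $\dim V=3$, $g\subset V$; it is a sudoku flag if every coset of $g$ meets every row, column and subsquare in exactly one location. A sudoku solution $M$ generated by a sudoku flag $(g,V)$ is a sudoku solution of order $q^2$ in which each coset of $g$ is exactly the set of locations of one symbol and each coset of $V$ is exactly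 the set of locations whose symbols have one given radix digit. *)

theory Defs
  imports "HOL-Analysis.Analysis"
begin

text \<open>Locations: vectors (x1,x2,x3,x4) in F^4, modelled as 'a^4 with components
  x$1 (large row), x$2 (row within large row), x$3 (large column), x$4 (column within
  large column). Symbols are natural numbers 0..q^2-1 with q = CARD('a).\<close>

type_synonym 'a loc = "'a ^ 4"

definition row_set :: "'a \<Rightarrow> 'a \<Rightarrow> 'a loc set" where
  "row_set a b = {x. x $ 1 = a \<and> x $ 2 = b}"

definition col_set :: "'a \<Rightarrow> 'a \<Rightarrow> 'a loc set" where
  "col_set c d = {x. x $ 3 = c \<and> x $ 4 = d}"

definition subsq_set :: "'a \<Rightarrow> 'a \<Rightarrow> 'a loc set" where
  "subsq_set a c = {x. x $ 1 = a \<and> x $ 3 = c}"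

definition cells :: "'a loc set set" where
  "cells = {row_set a b | a b. True} \<union> {col_set c d | c d. True} \<union> {subsq_set a c | a c. True}"

definition coset :: "'a::field loc \<Rightarrow> 'a loc set \<Rightarrow> 'a loc set" where
  "coset a W = (\<lambda>w. a + w) ` W"

definition is_coset :: "'a loc set \<Rightarrow> 'a::field loc set \<Rightarrow> bool" where
  "is_coset S W \<longleftrightarrow> (\<exists>a. S = coset a W)"

definition sudoku_solution :: "('a::{finite,field} loc \<Rightarrow> nat) \<Rightarrow> bool" where
  "sudoku_solution M \<longleftrightarrow>
     (\<forall>x. M x < CARD('a)^2) \<and>
     (\<forall>C\<in>cells. \<forall>s < CARD('a)^2. \<exists>!x. x \<in> C \<and> M x = s)"

definition orthogonal_sudoku :: "('a::{finite,field} loc \<Rightarrow> nat) \<Rightarrow> ('a loc \<Rightarrow> nat) \<Rightarrow> bool" where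
  "orthogonal_sudoku M1 M2 \<longleftrightarrow>
     sudoku_solution M1 \<and> sudoku_solution M2 \<and>
     (\<forall>s1 < CARD('a)^2. \<forall>s2 < CARD('a)^2. \<exists>!x. M1 x = s1 \<and> M2 x = s2)"

text \<open>Radix digit b_q of symbol s = b_q q + b_1.\<close>
definition radix :: "'a::finite itself \<Rightarrow> nat \<Rightarrow> nat" where
  "radix _ s = s div CARD('a)"

definition composite :: "('a::{finite,field} loc \<Rightarrow> nat) \<Rightarrow> ('a loc \<Rightarrow> nat) \<Rightarrow> 'a loc \<Rightarrow> nat" where
  "composite M1 M2 x = CARD('a) * radix TYPE('a) (M1 x) + radix TYPE('a) (M2 x)"

definition flag :: "'a::field loc set \<Rightarrow> 'a loc set \<Rightarrow> bool" where
  "flag g V \<longleftrightarrow> vec.subspace g \<and> vec.subspace V \<and> vec.dim g = 2 \<and> vec.dim V = 3 \<and> g \<subseteq> V"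

definition sudoku_flag :: "'a::field loc set \<Rightarrow> 'a loc set \<Rightarrow> bool" where
  "sudoku_flag g V \<longleftrightarrow> flag g V \<and>
     (\<forall>a. \<forall>C\<in>cells. \<exists>!x. x \<in> coset a g \<and> x \<in> C)"

definition generated_by_flag :: "('a::{finite,field} loc \<Rightarrow> nat) \<Rightarrow> 'a loc set \<Rightarrow> 'a loc set \<Rightarrow> bool" where
  "generated_by_flag M g V \<longleftrightarrow> sudoku_flag g V \<and> sudoku_solution M \<and>
     (\<forall>a. \<exists>s. coset a g = {x. M x = s}) \<and>
     (\<forall>a. \<exists>r. coset a V = {x. radix TYPE('a) (M x) = r})"

end

theory Submission
  imports Defs
begin

text \<open>Two locations carry the same symbol of the composite solution iff both radix digits
  agree, i.e. iff they lie in a common coset of V1 and of V2, hence of V1 \<inter> V2. The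
  intersection of two 3-dimensional subspaces of F^4 has dimension 2 or 3; dimension 3 would
  force V1 \<inter> V2 = V1, but a coset of V1 contains a whole coset of g1, and a coset of g1
  through a point of V1 off g1 meets the row of any given location in a second point,
  so some symbol of the composite solution would repeat in that row.\<close>

lemma mem_coset_iff: "x \<in> coset a W \<longleftrightarrow> x - a \<in> W"
  unfolding coset_def by (auto simp: image_iff) (metis add.commute diff_add_cancel)

lemma radix_less_card:
  assumes "sudoku_solution (M :: 'a::{finite,field} loc \<Rightarrow> nat)"
  shows "radix TYPE('a) (M x) < CARD('a)"
proof -
  have "M x < CARD('a) * CARD('a)"
    using assms unfolding sudoku_solution_def by (simp add: power2_eq_square)
  then show ?thesis unfolding radix_def by (simp add: less_mult_imp_div_less)
qed

lemma mult_add_eq_mult_add_iff: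
  fixes q a b c d :: nat
  assumes "b < q" "d < q"
  shows "q * a + b = q * c + d \<longleftrightarrow> a = c \<and> b = d"
proof
  assume h: "q * a + b = q * c + d"
  have "a = c" using arg_cong[OF h, of "\<lambda>n. n div q"] assms by simp
  with h show "a = c \<and> b = d" by simp
qed simp

lemma composite_eq_iff:
  assumes "sudoku_solution (M2 :: 'a::{finite,field} loc \<Rightarrow> nat)"
  shows "composite M1 M2 x = composite M1 M2 y \<longleftrightarrow>
    radix TYPE('a) (M1 x) = radix TYPE('a) (M1 y) \<and> radix TYPE('a) (M2 x) = radix TYPE('a) (M2 y)"
  unfolding composite_def using mult_add_eq_mult_add_iff radix_less_card[OF assms] by blast

lemma generated_by_flag_radix_eq_iff:
  assumes "generated_by_flag (M :: 'a::{finite,field} loc \<Rightarrow> nat) g V"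
  shows "radix TYPE('a) (M x) = radix TYPE('a) (M x0) \<longleftrightarrow> x \<in> coset x0 V"
proof -
  obtain r where r: "coset x0 V = {x. radix TYPE('a) (M x) = r}"
    using assms unfolding generated_by_flag_def by blast
  have "vec.subspace V"
    using assms unfolding generated_by_flag_def sudoku_flag_def flag_def by blast
  then have "x0 \<in> coset x0 V" by (simp add: mem_coset_iff vec.subspace_0)
  with r show ?thesis by auto
qed

lemma composite_level_set_eq_coset:
  assumes "generated_by_flag (M1 :: 'a::{finite,field} loc \<Rightarrow> nat) g1 V1" "generated_by_flag M2 g2 V2"
  shows "{x. composite M1 M2 x = composite M1 M2 x0} = coset x0 (V1 \<inter> V2)"
proof -
  have "sudoku_solution M2"
    using assms(2) unfolding generated_by_flag_def by auto
  then show ?thesis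
    using generated_by_flag_radix_eq_iff[OF assms(1)] generated_by_flag_radix_eq_iff[OF assms(2)]
    by (auto simp: composite_eq_iff mem_coset_iff)
qed

lemma dim_Int_lower_bound_cart:
  fixes V1 V2 :: "('a::field ^ 'n) set"
  assumes "vec.subspace V1" "vec.subspace V2"
  shows "vec.dim V1 + vec.dim V2 \<le> CARD('n) + vec.dim (V1 \<inter> V2)"
  using vec.dim_sums_Int[OF assms] dim_subset_UNIV_cart_gen[of "{x + y |x y. x \<in> V1 \<and> y \<in> V2}"]
  by linarith

lemma row_set_in_cells: "row_set a b \<in> cells"
  unfolding cells_def by blast

lemma sudoku_solution_unique_in_cell:
  assumes "sudoku_solution (M :: 'a::{finite,field} loc \<Rightarrow> nat)" "C \<in> cells" "s < CARD('a)^2"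
  shows "\<exists>!x. x \<in> C \<and> M x = s"
proof -
  have "\<forall>C\<in>cells. \<forall>s < CARD('a)^2. \<exists>!x. x \<in> C \<and> M x = s"
    using assms(1) unfolding sudoku_solution_def by (rule conjunct2)
  with assms(2,3) show ?thesis by simp
qed

lemma sudoku_flag_coset_meets_cell_twice:
  assumes "sudoku_flag g V" "C \<in> cells" "x0 \<in> C"
  obtains y where "y \<in> C" "y \<in> coset x0 V" "y \<noteq> x0"
proof -
  have g: "vec.subspace g" "vec.dim g = 2" and V: "vec.subspace V" "vec.dim V = 3" "g \<subseteq> V"
    using assms(1) unfolding sudoku_flag_def flag_def by auto
  then have "g \<noteq> V" by auto
  with V(3) obtain v where v: "v \<in> V" "v \<notin> g" by blast
  obtain y where y: "y \<in> coset (x0 + v) g" "y \<in> C"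
    using assms(1,2) unfolding sudoku_flag_def by blast
  then have yg: "y - x0 - v \<in> g" by (simp add: mem_coset_iff diff_diff_eq)
  then have "(y - x0 - v) + v \<in> V" using V v(1) vec.subspace_add by blast
  then have "y \<in> coset x0 V" by (simp add: mem_coset_iff)
  moreover have "y \<noteq> x0"
  proof
    assume "y = x0"
    with yg have "- (- v) \<in> g" using g(1) vec.subspace_neg by fastforce
    with v(2) show False by simp
  qed
  ultimately show thesis using that y(2) by blast
qed

lemma sudoku_solution_level_set_not_superset_coset:
  assumes "sudoku_solution (N :: 'a::{finite,field} loc \<Rightarrow> nat)" "sudoku_flag g V"
  shows "\<not> coset x0 V \<subseteq> {x. N x = N x0}"
proof
  let ?R = "row_set (x0 $ 1) (x0 $ 2)"
  assume level: "coset x0 V \<subseteq> {x. N x = N x0}"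
  have x0: "x0 \<in> ?R" unfolding row_set_def by simp
  obtain y where y: "y \<in> ?R" "y \<in> coset x0 V" "y \<noteq> x0"
    using sudoku_flag_coset_meets_cell_twice[OF assms(2) row_set_in_cells x0] .
  have "N x0 < CARD('a)^2" using assms(1) unfolding sudoku_solution_def by blast
  then have "\<exists>!x. x \<in> ?R \<and> N x = N x0"
    by (rule sudoku_solution_unique_in_cell[OF assms(1) row_set_in_cells])
  moreover have "N y = N x0" using level y(2) by blast
  ultimately show False using x0 y(1,3) by blast
qed

theorem proposition4p7:
  fixes M1 M2 :: "'a::{finite,field} loc \<Rightarrow> nat"
    and g1 V1 g2 V2 :: "'a loc set"
  assumes "orthogonal_sudoku M1 M2"
    and "generated_by_flag M1 g1 V1"
    and "generated_by_flag M2 g2 V2"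
    and "sudoku_solution (composite M1 M2)"
  shows "vec.subspace (V1 \<inter> V2) \<and> vec.dim (V1 \<inter> V2) = 2 \<and>
         (\<forall>s < CARD('a)^2. is_coset {x. composite M1 M2 x = s} (V1 \<inter> V2))"
proof -
  let ?N = "composite M1 M2"
  have flags: "sudoku_flag g1 V1" "sudoku_flag g2 V2"
    using assms(2,3) unfolding generated_by_flag_def by blast+
  then have "flag g1 V1" "flag g2 V2" unfolding sudoku_flag_def by blast+
  then have V: "vec.subspace V1" "vec.subspace V2" "vec.dim V1 = 3" "vec.dim V2 = 3"
    unfolding flag_def by blast+
  have level: "\<And>x0. {x. ?N x = ?N x0} = coset x0 (V1 \<inter> V2)"
    using composite_level_set_eq_coset[OF assms(2,3)] .
  have sub: "vec.subspace (V1 \<inter> V2)" using V by (simp add: vec.subspace_inter)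
  have "vec.dim (V1 \<inter> V2) \<ge> 2" using dim_Int_lower_bound_cart[OF V(1,2)] V by simp
  moreover have "vec.dim (V1 \<inter> V2) \<le> 3" using vec.dim_subset[of "V1 \<inter> V2" V1] V by simp
  moreover have "vec.dim (V1 \<inter> V2) \<noteq> 3"
  proof
    assume "vec.dim (V1 \<inter> V2) = 3"
    then have "V1 \<inter> V2 = V1" using vec.subspace_dim_equal[OF sub V(1)] V by simp
    then have "coset 0 V1 \<subseteq> {x. ?N x = ?N 0}" using level[of 0] by simp
    then show False using sudoku_solution_level_set_not_superset_coset[OF assms(4) flags(1)] by blast
  qed
  moreover have "is_coset {x. ?N x = s} (V1 \<inter> V2)" if "s < CARD('a)^2" for s
  proof -
    have "\<exists>!x. x \<in> row_set 0 0 \<and> ?N x = s"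
      by (rule sudoku_solution_unique_in_cell[OF assms(4) row_set_in_cells that])
    then obtain x0 where "?N x0 = s" by blast
    then show ?thesis using level[of x0] unfolding is_coset_def by auto
  qed
  ultimately show ?thesis using sub by simp
qed

end
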